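(* Let $X$ and $Y$ be metric spaces and assume that $Y$ is metrically convex. Let $K\ge 0$ and let $f:X\to Y$ be a map that is co-coarsely continuous with constant $K$. Then for every $d>K$ there exists $c=c(d,K)>0$ such that for all $x\in X$ and all $r\ge d$, $$f(B_X(x,cr))^K\supseteq B_Y(f(x),r).$$
   Context: For a metric space $Z$, $B_Z(z,r)$ denotes the closed ball centered at $z$ of radius $r$. For a subset $A\subseteq Y$ and $K\ge0$, $A^K:=\{y\in Y: d_Y(y,a)\le K \text{ for some } a\in A\}$ is the closed $K$-neighborhood of $A$. A metric space $Y$ is metrically convex if for all $y_0,y_1\in Y$ and $0<\lambda<1$ there is $y_\lambda\in Y$ with $d(y_0,y_\lambda)=\lambda d(y_0,y_1)$ and $d(y_1,y_\lambda)=(1-\lambda)d(y_0,y_1)$. A map $f:X\to Y$ is co-coarsely continuous with constant $K\ge0$ if for every $d>K$ there exists $\delta=\delta(d)>0$ such that for all $x\in X$, $f(B_X(x,\delta))^K\supseteq B_Y(f(x),d)$. *)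

theory Defs
  imports "HOL-Analysis.Analysis"
begin

definition nbhd :: "'b::metric_space set \<Rightarrow> real \<Rightarrow> 'b set" where
  "nbhd A K = {y. \<exists>a\<in>A. dist y a \<le> K}"

definition metrically_convex :: "'b::metric_space itself \<Rightarrow> bool" where
  "metrically_convex (TYPE('b)) \<longleftrightarrow>
     (\<forall>(y0::'b) y1 (t::real). 0 < t \<and> t < 1 \<longrightarrow>
        (\<exists>y. dist y0 y = t * dist y0 y1 \<and> dist y1 y = (1 - t) * dist y0 y1))"

definition co_coarsely_continuous :: "('a::metric_space \<Rightarrow> 'b::metric_space) \<Rightarrow> real \<Rightarrow> bool" where
  "co_coarsely_continuous f K \<longleftrightarrow> K \<ge> 0 \<and>
     (\<forall>d>K. \<exists>\<delta>>0. \<forall>x. cball (f x) d \<subseteq> nbhd (f ` cball x \<delta>) K)"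

end

theory Submission
  imports Defs
begin

text \<open>A point at distance d - K beyond the region already covered is reached by walking
  distance d from f x towards it along a metric segment: the co-coarse hypothesis yields
  some x1 within \<delta> of x whose image lies within K of the intermediate point, hence
  f x1 is within the old radius of the target. Iterating, a ball of radius
  d + n (d - K) is covered from a domain ball of radius (n + 1) \<delta>, and choosing
  n \<approx> r / (d - K) makes the domain radius linear in r.\<close>

lemma metrically_convex_point_between:
  fixes y0 y1 :: "'b::metric_space"
  assumes "metrically_convex TYPE('b)" and "0 \<le> s" and "s \<le> dist y0 y1"
  shows "\<exists>y. dist y0 y = s \<and> dist y1 y = dist y0 y1 - s"
proof (cases "s = 0 \<or> s = dist y0 y1")
  case True
  then show ?thesis
    by (metis diff_self diff_zero dist_commute dist_self)
next
  case False
  with assms(2,3) have D: "0 < dist y0 y1" and "0 < s / dist y0 y1" "s / dist y0 y1 < 1"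
    by (auto simp: divide_less_eq zero_less_divide_iff)
  then obtain y where "dist y0 y = s / dist y0 y1 * dist y0 y1"
    and "dist y1 y = (1 - s / dist y0 y1) * dist y0 y1"
    using assms(1) unfolding metrically_convex_def by blast
  with D show ?thesis
    by (auto simp: algebra_simps)
qed

lemma nbhd_image_mono:
  assumes "A \<subseteq> B"
  shows "nbhd (f ` A) K \<subseteq> nbhd (f ` B) K"
  using assms unfolding nbhd_def by blast

lemma co_coarse_cover_step:
  fixes f :: "'a::metric_space \<Rightarrow> 'b::metric_space" and d \<rho> \<delta> r K :: real
  assumes conv: "metrically_convex TYPE('b)" and "0 \<le> d" and "0 \<le> \<rho>"
    and step: "\<And>x. cball (f x) d \<subseteq> nbhd (f ` cball x \<delta>) K"
    and cover: "\<And>x. cball (f x) r \<subseteq> nbhd (f ` cball x \<rho>) K"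
  shows "cball (f x) (r + (d - K)) \<subseteq> nbhd (f ` cball x (\<rho> + \<delta>)) K"
proof
  fix y assume y: "y \<in> cball (f x) (r + (d - K))"
  show "y \<in> nbhd (f ` cball x (\<rho> + \<delta>)) K"
  proof (cases "dist (f x) y \<le> d")
    case True
    with step[of x] have "y \<in> nbhd (f ` cball x \<delta>) K" by auto
    moreover have "cball x \<delta> \<subseteq> cball x (\<rho> + \<delta>)" using \<open>0 \<le> \<rho>\<close> by auto
    ultimately show ?thesis using nbhd_image_mono by blast
  next
    case False
    then obtain y1 where y1: "dist (f x) y1 = d" "dist y y1 = dist (f x) y - d"
      using metrically_convex_point_between[OF conv \<open>0 \<le> d\<close>, of "f x" y]
      by (auto simp: dist_commute)
    with step obtain x1 where x1: "dist x x1 \<le> \<delta>" "dist y1 (f x1) \<le> K"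
      unfolding nbhd_def by fastforce
    have "dist (f x1) y \<le> dist y y1 + dist y1 (f x1)"
      by (metis dist_commute dist_triangle)
    also have "\<dots> \<le> r" using x1 y1 y by (simp add: dist_commute)
    finally obtain x' where x': "dist x1 x' \<le> \<rho>" "dist y (f x') \<le> K"
      using cover[of x1] unfolding nbhd_def by fastforce
    have "dist x x' \<le> \<rho> + \<delta>"
      using dist_triangle[of x x' x1] x1 x' by linarith
    with x' show ?thesis unfolding nbhd_def by fastforce
  qed
qed

lemma co_coarse_cover_iterate:
  fixes f :: "'a::metric_space \<Rightarrow> 'b::metric_space" and d \<delta> K :: real and n :: nat
  assumes conv: "metrically_convex TYPE('b)" and "0 \<le> d" and "0 \<le> \<delta>"
    and step: "\<And>x. cball (f x) d \<subseteq> nbhd (f ` cball x \<delta>) K"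
  shows "cball (f x) (d + n * (d - K)) \<subseteq> nbhd (f ` cball x ((n + 1) * \<delta>)) K"
proof (induction n arbitrary: x)
  case 0
  show ?case using step by simp
next
  case (Suc n)
  have "cball (f x) (d + n * (d - K) + (d - K)) \<subseteq> nbhd (f ` cball x ((n + 1) * \<delta> + \<delta>)) K"
    using co_coarse_cover_step[OF conv \<open>0 \<le> d\<close> _ step Suc.IH] \<open>0 \<le> \<delta>\<close> by simp
  then show ?case by (simp add: algebra_simps)
qed

lemma ceiling_quotient_bound:
  fixes r d e :: real
  assumes "0 < d" and "d \<le> r" and "0 < e"
  shows "real (nat \<lceil>r / e\<rceil>) + 1 \<le> r * (1 / e + 2 / d)"
proof -
  have "real (nat \<lceil>r / e\<rceil>) \<le> r / e + 1"
    using assms by (simp add: divide_nonneg_pos)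
  moreover have "2 \<le> 2 * r / d" using assms by (simp add: field_simps)
  ultimately show ?thesis by (simp add: algebra_simps)
qed

theorem lemma2p2:
  fixes f :: "'a::metric_space \<Rightarrow> 'b::metric_space" and K :: real
  assumes "metrically_convex TYPE('b)"
    and "K \<ge> 0"
    and "co_coarsely_continuous f K"
  shows "\<forall>d>K. \<exists>c>0. \<forall>x r. r \<ge> d \<longrightarrow> cball (f x) r \<subseteq> nbhd (f ` cball x (c * r)) K"
proof (intro allI impI)
  fix d assume "d > K"
  then obtain \<delta> where "\<delta> > 0" and step: "\<And>x. cball (f x) d \<subseteq> nbhd (f ` cball x \<delta>) K"
    using assms(3) unfolding co_coarsely_continuous_def by blast
  have "d > 0" using assms(2) \<open>d > K\<close> by simp
  define c where "c = \<delta> * (1 / (d - K) + 2 / d)"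
  have "c > 0" using \<open>\<delta> > 0\<close> \<open>d > 0\<close> \<open>d > K\<close> unfolding c_def by (simp add: add_pos_pos)
  moreover have "cball (f x) r \<subseteq> nbhd (f ` cball x (c * r)) K" if "r \<ge> d" for x r
  proof -
    define n where "n = nat \<lceil>r / (d - K)\<rceil>"
    have "r / (d - K) \<le> n" unfolding n_def by linarith
    then have "r \<le> d + n * (d - K)"
      using \<open>d > 0\<close> \<open>d > K\<close> by (simp add: field_simps)
    then have "cball (f x) r \<subseteq> nbhd (f ` cball x ((n + 1) * \<delta>)) K"
      using co_coarse_cover_iterate[OF assms(1) _ _ step, of x n] \<open>d > 0\<close> \<open>\<delta> > 0\<close> by force
    moreover have "(n + 1) * \<delta> \<le> c * r"
      using ceiling_quotient_bound[OF \<open>d > 0\<close> that, of "d - K"] \<open>d > K\<close> \<open>\<delta> > 0\<close>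
      unfolding c_def n_def by (simp add: mult_right_mono mult.commute mult.left_commute)
    then have "cball x ((n + 1) * \<delta>) \<subseteq> cball x (c * r)" by auto
    ultimately show ?thesis using nbhd_image_mono by blast
  qed
  ultimately show "\<exists>c>0. \<forall>x r. r \<ge> d \<longrightarrow> cball (f x) r \<subseteq> nbhd (f ` cball x (c * r)) K"
    by blast
qed

end
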